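(* Let $G=(V,E)$ be a simple undirected graph with $V=[n]$, and let $k\ge 1$ be an integer. Consider the following three optimization problems. (P1) Maximize $\sum_{r\in[k]}\sum_{i\in[n]} Y^{rr}_{ii}$ over $Y\in\mathbb S^{n(k+1)}$, viewed as a $(k+1)\times(k+1)$ array of $n\times n$ blocks $Y^{rl}$ ($r,l\in[k+1]$), subject to: $Y^{rr}_{ij}=0$ for all $\{i,j\}\in E$, $r\in[k]$; $\sum_{r\in[k+1]}Y^{rr}_{ii}=1$ for all $i\in[n]$; $Y^{rl}_{ii}=0$ for all $i\in[n]$ and $r,l\in[k+1]$ with $r\ne l$; $Y\ge 0$ entrywise; and $\begin{bmatrix}1&\mathrm{diag}(Y)^{\top}\\ \mathrm{diag}(Y)&Y\end{bmatrix}\succeq 0$. (P2) Maximize $\sum_{r\in[k]}\sum_{i\in[n]} Y^{rr}_{ii}$ over $Y\in\mathbb S^{nk}$, viewed as a $k\times k$ array of $n\times n$ blocks $Y^{rl}$ ($r,l\in[k]$), subject to: $Y^{rr}_{ij}=0$ for all $\{i,j\}\in E$, $r\in[k]$; $Y^{rl}_{ii}=0$ for all $i\in[n]$, $r\neq l$; $Y\ge0$ entrywise; $\begin{bmatrix}1&\mathrm{diag}(Y)^{\top}\\ \mathrm{diag}(Y)&Y\end{bmatrix}\succeq 0$; and additionally $1-\sum_{r\in[k]}Y^{rr}_{ii}-\sum_{r\in[k]}Y^{rr}_{jj}+\sum_{r\in[k]}\sum_{l\in[k]}Y^{rl}_{ij}\ge 0$ for all $i,j\in[n]$ with $i>j$,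 and $Y^{ll}_{ii}-\sum_{r\in[k]}Y^{rl}_{ij}\ge 0$ for all $i,j\in[n]$ with $i\ne j$ and all $l\in[k]$. (R1) $\theta^1_k(G)=\max \langle I,Z\rangle$ over $Z,X\in\mathbb S^n$ subject to: $Z_{ij}=0$ for $\{i,j\}\in E$; $X_{ii}=0$ for $i\in[n]$; $Z\ge0$, $X\ge 0$ entrywise; $Z-X\succeq 0$; $\begin{bmatrix}1&\mathrm{diag}(Z)^{\top}\\ \mathrm{diag}(Z)&Z+(k-1)X\end{bmatrix}\succeq 0$; $1-Z_{ii}-Z_{jj}+Z_{ij}+(k-1)X_{ij}\ge 0$ for $i,j\in[n]$, $i>j$; and $Z_{ii}-Z_{ij}-(k-1)X_{ij}\ge 0$ for $i,j\in[n]$, $i\ne j$. Then (P1), (P2) and (R1) are equivalent (for each, any feasible solution yields a feasible solution of each of the others with the same objective value; in particular their optimal values coincide), and (R1) is strictly feasible.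
   Context: $\mathbb S^m$ is the space of real symmetric $m\times m$ matrices; $\langle A,B\rangle=\mathrm{trace}(AB)$; $\mathrm{diag}(Y)$ is the vector of diagonal entries of $Y$; $A\ge 0$ means entrywise nonnegativity and $\succeq 0$ (resp. $\succ0$) means positive semidefinite (resp. definite). Strict feasibility of (R1) means there is a feasible point of (R1) at which both matrix inequalities hold with positive definite matrices. *)

theory Defs
  imports Complex_Main
begin

text \<open>Vertices are 0,...,n-1 (standing for [n]); a block matrix with m blocks of size n
  is indexed by pairs (r,i) with r < m (block index) and i < n (vertex index).\<close>

definition sym_on :: "'a set \<Rightarrow> ('a \<Rightarrow> 'a \<Rightarrow> real) \<Rightarrow> bool" where
  "sym_on I M \<longleftrightarrow> (\<forall>i\<in>I. \<forall>j\<in>I. M i j = M j i)"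

definition psd_on :: "'a set \<Rightarrow> ('a \<Rightarrow> 'a \<Rightarrow> real) \<Rightarrow> bool" where
  "psd_on I M \<longleftrightarrow> sym_on I M \<and>
     (\<forall>x. 0 \<le> (\<Sum>i\<in>I. \<Sum>j\<in>I. x i * M i j * x j))"

definition pd_on :: "'a set \<Rightarrow> ('a \<Rightarrow> 'a \<Rightarrow> real) \<Rightarrow> bool" where
  "pd_on I M \<longleftrightarrow> sym_on I M \<and>
     (\<forall>x. (\<exists>i\<in>I. x i \<noteq> 0) \<longrightarrow> 0 < (\<Sum>i\<in>I. \<Sum>j\<in>I. x i * M i j * x j))"

text \<open>The bordered matrix [1, d^T; d, M], indexed by None (the border) and Some a.\<close>
definition bordered :: "('a \<Rightarrow> real) \<Rightarrow> ('a \<Rightarrow> 'a \<Rightarrow> real) \<Rightarrow> 'a option \<Rightarrow> 'a option \<Rightarrow> real" where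
  "bordered d M a b = (case (a, b) of
      (None, None) \<Rightarrow> 1
    | (None, Some j) \<Rightarrow> d j
    | (Some i, None) \<Rightarrow> d i
    | (Some i, Some j) \<Rightarrow> M i j)"

definition bidx :: "'a set \<Rightarrow> 'a option set" where
  "bidx I = insert None (Some ` I)"

definition blk :: "nat \<Rightarrow> nat \<Rightarrow> (nat \<times> nat) set" where
  "blk m n = {(r, i). r < m \<and> i < n}"

definition simple_graph :: "nat \<Rightarrow> nat set set \<Rightarrow> bool" where
  "simple_graph n E \<longleftrightarrow> (\<forall>e\<in>E. \<exists>i j. e = {i, j} \<and> i \<noteq> j \<and> i < n \<and> j < n)"

definition objY :: "nat \<Rightarrow> nat \<Rightarrow> (nat \<times> nat \<Rightarrow> nat \<times> nat \<Rightarrow> real) \<Rightarrow> real" where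
  "objY n k Y = (\<Sum>r<k. \<Sum>i<n. Y (r, i) (r, i))"

definition objZ :: "nat \<Rightarrow> (nat \<Rightarrow> nat \<Rightarrow> real) \<Rightarrow> real" where
  "objZ n Z = (\<Sum>i<n. Z i i)"

definition feasP1 :: "nat \<Rightarrow> nat set set \<Rightarrow> nat \<Rightarrow> (nat \<times> nat \<Rightarrow> nat \<times> nat \<Rightarrow> real) \<Rightarrow> bool" where
  "feasP1 n E k Y \<longleftrightarrow>
     sym_on (blk (k+1) n) Y \<and>
     (\<forall>r<k. \<forall>i j. {i, j} \<in> E \<longrightarrow> Y (r, i) (r, j) = 0) \<and>
     (\<forall>i<n. (\<Sum>r<k+1. Y (r, i) (r, i)) = 1) \<and>
     (\<forall>i<n. \<forall>r<k+1. \<forall>l<k+1. r \<noteq> l \<longrightarrow> Y (r, i) (l, i) = 0) \<and>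
     (\<forall>a\<in>blk (k+1) n. \<forall>b\<in>blk (k+1) n. 0 \<le> Y a b) \<and>
     psd_on (bidx (blk (k+1) n)) (bordered (\<lambda>a. Y a a) Y)"

definition feasP2 :: "nat \<Rightarrow> nat set set \<Rightarrow> nat \<Rightarrow> (nat \<times> nat \<Rightarrow> nat \<times> nat \<Rightarrow> real) \<Rightarrow> bool" where
  "feasP2 n E k Y \<longleftrightarrow>
     sym_on (blk k n) Y \<and>
     (\<forall>r<k. \<forall>i j. {i, j} \<in> E \<longrightarrow> Y (r, i) (r, j) = 0) \<and>
     (\<forall>i<n. \<forall>r<k. \<forall>l<k. r \<noteq> l \<longrightarrow> Y (r, i) (l, i) = 0) \<and>
     (\<forall>a\<in>blk k n. \<forall>b\<in>blk k n. 0 \<le> Y a b) \<and>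
     psd_on (bidx (blk k n)) (bordered (\<lambda>a. Y a a) Y) \<and>
     (\<forall>i<n. \<forall>j<n. j < i \<longrightarrow>
        0 \<le> 1 - (\<Sum>r<k. Y (r, i) (r, i)) - (\<Sum>r<k. Y (r, j) (r, j))
               + (\<Sum>r<k. \<Sum>l<k. Y (r, i) (l, j))) \<and>
     (\<forall>i<n. \<forall>j<n. i \<noteq> j \<longrightarrow> (\<forall>l<k.
        0 \<le> Y (l, i) (l, i) - (\<Sum>r<k. Y (r, i) (l, j))))"

definition feasR1 :: "nat \<Rightarrow> nat set set \<Rightarrow> nat \<Rightarrow> (nat \<Rightarrow> nat \<Rightarrow> real) \<Rightarrow> (nat \<Rightarrow> nat \<Rightarrow> real) \<Rightarrow> bool" where
  "feasR1 n E k Z X \<longleftrightarrow>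
     sym_on {..<n} Z \<and> sym_on {..<n} X \<and>
     (\<forall>i j. {i, j} \<in> E \<longrightarrow> Z i j = 0) \<and>
     (\<forall>i<n. X i i = 0) \<and>
     (\<forall>i<n. \<forall>j<n. 0 \<le> Z i j \<and> 0 \<le> X i j) \<and>
     psd_on {..<n} (\<lambda>i j. Z i j - X i j) \<and>
     psd_on (bidx {..<n}) (bordered (\<lambda>i. Z i i) (\<lambda>i j. Z i j + (real k - 1) * X i j)) \<and>
     (\<forall>i<n. \<forall>j<n. j < i \<longrightarrow> 0 \<le> 1 - Z i i - Z j j + Z i j + (real k - 1) * X i j) \<and>
     (\<forall>i<n. \<forall>j<n. i \<noteq> j \<longrightarrow> 0 \<le> Z i i - Z i j - (real k - 1) * X i j)"

end

(* Read a feasible Y as the moment matrix of colour indicators x_ri (vertex i gets colour r; in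
   (P1) block k means "uncoloured", so Sum_r x_ri = 1). Summing the diagonal blocks gives Z and
   averaging the off-diagonal ones gives X. This aggregation is a congruence, so it keeps the
   bordered matrix positive semidefinite, and Z - X is a positive combination of the forms of the
   differences x_ri - x_li. In (P1), Sum_r x_ri = 1 yields row-sum identities that give the linear
   inequalities of (R1). Conversely, spreading Z and X uniformly over k colours (diagonal blocks
   Z/k, off-diagonal blocks X/k) gives a congruence of the bordered (R1) matrix plus one of Z - X;
   (P1) adds the complementary indicator 1 - Sum_r x_ri as a last block. Finally Z = eI, X = 0 with
   e < 1/n is strictly feasible. *)

theory Submission
  imports Defs "HOL-Library.Indicator_Function"
begin

section \<open>Quadratic forms and positive semidefiniteness\<close>

definition bform :: "'a set \<Rightarrow> ('a \<Rightarrow> 'a \<Rightarrow> real) \<Rightarrow> ('a \<Rightarrow> real) \<Rightarrow> ('a \<Rightarrow> real) \<Rightarrow> real" where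
  "bform I M u v = (\<Sum>a\<in>I. \<Sum>b\<in>I. u a * M a b * v b)"

lemma bform_add_left: "bform I M (\<lambda>x. u x + v x) w = bform I M u w + bform I M v w"
  unfolding bform_def by (simp add: distrib_right sum.distrib)

lemma bform_add_right: "bform I M w (\<lambda>x. u x + v x) = bform I M w u + bform I M w v"
  unfolding bform_def by (simp add: distrib_left sum.distrib)

lemma bform_diff_left: "bform I M (\<lambda>x. u x - v x) w = bform I M u w - bform I M v w"
  unfolding bform_def by (simp add: left_diff_distrib sum_subtractf)

lemma bform_diff_right: "bform I M w (\<lambda>x. u x - v x) = bform I M w u - bform I M w v"
  unfolding bform_def by (simp add: right_diff_distrib sum_subtractf)

lemma bform_scale_left: "bform I M (\<lambda>x. c * u x) w = c * bform I M u w"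
  unfolding bform_def by (simp add: sum_distrib_left mult.assoc)

lemma bform_scale_right: "bform I M w (\<lambda>x. c * u x) = c * bform I M w u"
  unfolding bform_def by (simp add: sum_distrib_left mult_ac)

lemma bform_sum_left: "bform I M (\<lambda>x. \<Sum>r\<in>R. u r x) w = (\<Sum>r\<in>R. bform I M (u r) w)"
  unfolding bform_def by (simp add: sum_distrib_right sum.swap[of _ R])

lemma bform_sum_right: "bform I M w (\<lambda>x. \<Sum>r\<in>R. u r x) = (\<Sum>r\<in>R. bform I M w (u r))"
  unfolding bform_def by (simp add: sum_distrib_left sum.swap[of _ R] mult_ac)

lemma bform_zero_left [simp]: "bform I M (\<lambda>_. 0) v = 0"
  by (simp add: bform_def)

lemma bform_zero_right [simp]: "bform I M u (\<lambda>_. 0) = 0"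
  by (simp add: bform_def)

lemma bform_divide_left: "bform I M (\<lambda>x. u x / c) w = bform I M u w / c"
  using bform_scale_left[where c = "1 / c"] by simp

lemma bform_divide_right: "bform I M w (\<lambda>x. u x / c) = bform I M w u / c"
  using bform_scale_right[where c = "1 / c"] by simp

lemmas bform_linear =
  bform_add_left bform_add_right bform_diff_left bform_diff_right bform_scale_left
  bform_scale_right bform_divide_left bform_divide_right bform_sum_left bform_sum_right

lemma bform_indicator_left:
  "finite I \<Longrightarrow> a \<in> I \<Longrightarrow> bform I M (indicator {a}) v = (\<Sum>b\<in>I. M a b * v b)"
  unfolding bform_def by (simp add: mult.assoc sum_distrib_left[symmetric] indicator_times_eq_if)

lemma bform_indicator [simp]:
  "finite I \<Longrightarrow> a \<in> I \<Longrightarrow> b \<in> I \<Longrightarrow> bform I M (indicator {a}) (indicator {b}) = M a b"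
  by (simp add: bform_indicator_left mult.commute[of _ "indicator _ _"] indicator_times_eq_if)

lemma bform_commute: "sym_on I M \<Longrightarrow> bform I M u v = bform I M v u"
  unfolding bform_def sym_on_def
  by (subst sum.swap) (auto intro!: sum.cong simp: mult_ac)

lemma psd_on_iff_bform: "psd_on I M \<longleftrightarrow> sym_on I M \<and> (\<forall>x. 0 \<le> bform I M x x)"
  unfolding psd_on_def bform_def by simp

lemma psd_on_congruence_sum:
  assumes psd: "psd_on J M" and c: "\<And>\<rho>. \<rho> \<in> R \<Longrightarrow> 0 \<le> c \<rho>"
    and N: "\<And>i j. i \<in> I \<Longrightarrow> j \<in> I \<Longrightarrow> N i j = (\<Sum>\<rho>\<in>R. c \<rho> * bform J M (L \<rho> i) (L \<rho> j))"
  shows "psd_on I N"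
  unfolding psd_on_iff_bform
proof (intro conjI allI)
  have "sym_on J M" using psd by (simp add: psd_on_iff_bform)
  from bform_commute[OF this] show "sym_on I N" unfolding sym_on_def using N by simp
next
  fix x
  define v where "v \<rho> = (\<lambda>a. \<Sum>i\<in>I. x i * L \<rho> i a)" for \<rho>
  have "bform I N x x = (\<Sum>i\<in>I. \<Sum>j\<in>I. x i * N i j * x j)"
    by (simp add: bform_def)
  also have "\<dots> = (\<Sum>\<rho>\<in>R. c \<rho> * (\<Sum>i\<in>I. \<Sum>j\<in>I. x i * bform J M (L \<rho> i) (L \<rho> j) * x j))"
    using N by (simp add: sum_distrib_left sum_distrib_right sum.swap[of _ R] mult_ac)
  also have "\<dots> = (\<Sum>\<rho>\<in>R. c \<rho> * bform J M (v \<rho>) (v \<rho>))"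
    unfolding v_def bform_linear by (simp add: sum_distrib_left mult_ac)
  also have "\<dots> \<ge> 0"
    using psd c by (intro sum_nonneg mult_nonneg_nonneg) (auto simp: psd_on_iff_bform)
  finally show "0 \<le> bform I N x x" .
qed

lemma psd_on_congruence:
  "psd_on J M \<Longrightarrow> (\<And>i j. i \<in> I \<Longrightarrow> j \<in> I \<Longrightarrow> N i j = bform J M (L i) (L j)) \<Longrightarrow> psd_on I N"
  using psd_on_congruence_sum[of J M "{()}" "\<lambda>_. 1" I N "\<lambda>_. L"] by simp

lemma psd_on_subset: "psd_on I M \<Longrightarrow> finite I \<Longrightarrow> J \<subseteq> I \<Longrightarrow> psd_on J M"
  by (rule psd_on_congruence[where L = "\<lambda>a. indicator {a}"]) (auto simp: subset_iff)

lemma psd_on_add: "psd_on I A \<Longrightarrow> psd_on I B \<Longrightarrow> psd_on I (\<lambda>a b. A a b + B a b)"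
  unfolding psd_on_iff_bform sym_on_def bform_def
  by (auto simp: distrib_left distrib_right sum.distrib intro!: add_nonneg_nonneg)

lemma psd_on_cong:
  "psd_on I A \<Longrightarrow> (\<And>a b. a \<in> I \<Longrightarrow> b \<in> I \<Longrightarrow> A a b = B a b) \<Longrightarrow> psd_on I B"
  unfolding psd_on_def sym_on_def by (metis (no_types, lifting) sum.cong)

lemma pd_on_imp_psd_on: "pd_on I M \<Longrightarrow> psd_on I M"
  unfolding pd_on_def psd_on_def
  by (metis (no_types, lifting) less_eq_real_def mult_eq_0_iff sum.neutral)

lemma psd_on_bform_null:
  assumes psd: "psd_on I M" and w: "bform I M w w = 0"
  shows "bform I M u w = 0"
proof -
  define c where "c = bform I M u w"
  define m where "m = bform I M u u"
  have m: "0 \<le> m" using psd unfolding m_def psd_on_iff_bform by simp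
  have "0 \<le> bform I M (\<lambda>x. w x + t * u x) (\<lambda>x. w x + t * u x)" for t
    using psd unfolding psd_on_iff_bform by simp
  also have "bform I M (\<lambda>x. w x + t * u x) (\<lambda>x. w x + t * u x) = 2 * t * c + t\<^sup>2 * m" for t
    using w bform_commute[of I M u w] psd
    by (simp add: bform_linear c_def m_def psd_on_iff_bform power2_eq_square algebra_simps)
  finally have quad: "0 \<le> 2 * t * c + t\<^sup>2 * m" for t .
  define s where "s = 1 / (m + 1)"
  have s: "0 < s" "s * m < 1" using m unfolding s_def by (simp_all add: field_simps)
  have "2 * (- (s * c)) * c + (- (s * c))\<^sup>2 * m = s * (c\<^sup>2 * (s * m - 2))"
    by (simp add: power2_eq_square algebra_simps)
  with quad[of "- (s * c)"] have "0 \<le> s * (c\<^sup>2 * (s * m - 2))" by linarith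
  with s have "0 \<le> c\<^sup>2 * (s * m - 2)" by (simp add: zero_le_mult_iff)
  with s have "c\<^sup>2 \<le> 0" by (simp add: zero_le_mult_iff)
  then show ?thesis unfolding c_def by simp
qed

lemma bordered_simps [simp]:
  "bordered d M None None = 1" "bordered d M None (Some j) = d j"
  "bordered d M (Some i) None = d i" "bordered d M (Some i) (Some j) = M i j"
  unfolding bordered_def by auto

lemma finite_bidx [simp]: "finite I \<Longrightarrow> finite (bidx I)"
  unfolding bidx_def by simp

lemma mem_bidx [simp]: "None \<in> bidx I" "Some a \<in> bidx I \<longleftrightarrow> a \<in> I"
  unfolding bidx_def by auto

lemma bidx_mono: "I \<subseteq> J \<Longrightarrow> bidx I \<subseteq> bidx J"
  unfolding bidx_def by auto

lemma sym_on_bordered: "sym_on I M \<Longrightarrow> sym_on (bidx I) (bordered d M)"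
  unfolding sym_on_def bidx_def bordered_def by auto

lemma psd_on_bordered_imp_psd_on:
  "psd_on (bidx I) (bordered d M) \<Longrightarrow> finite I \<Longrightarrow> psd_on I M"
  by (rule psd_on_congruence[where L = "\<lambda>i. indicator {Some i}"]) auto

lemma psd_on_bordered_diag:
  assumes "psd_on (bidx I) (bordered d M)" "finite I" "i \<in> I"
  shows "2 * d i \<le> 1 + M i i"
proof -
  have "0 \<le> bform (bidx I) (bordered d M) (\<lambda>x. indicator {Some i} x - indicator {None} x)
      (\<lambda>x. indicator {Some i} x - indicator {None} x)"
    using assms(1) by (simp add: psd_on_iff_bform)
  then show ?thesis
    using assms(2,3) by (simp add: bform_linear)
qed

lemma bform_bordered:
  assumes "finite I"
  shows "bform (bidx I) (bordered d M) x x =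
    (x None)\<^sup>2 + 2 * x None * (\<Sum>i\<in>I. d i * x (Some i)) + bform I M (x \<circ> Some) (x \<circ> Some)"
proof -
  have "None \<notin> Some ` I" by auto
  then show ?thesis
    unfolding bform_def bidx_def using assms
    by (simp add: sum.reindex sum.distrib sum_distrib_left algebra_simps power2_eq_square)
qed

lemma blk_eq: "blk k n = {..<k} \<times> {..<n}"
  unfolding blk_def by auto

lemma finite_blk [simp]: "finite (blk k n)"
  by (simp add: blk_eq)

lemma mem_blk [simp]: "(r, i) \<in> blk k n \<longleftrightarrow> r < k \<and> i < n"
  unfolding blk_def by simp

lemma blk_mono: "k \<le> k' \<Longrightarrow> blk k n \<subseteq> blk k' n"
  unfolding blk_def by auto

section \<open>Aggregating a block matrix\<close>

definition aggZ :: "nat \<Rightarrow> (nat \<times> nat \<Rightarrow> nat \<times> nat \<Rightarrow> real) \<Rightarrow> nat \<Rightarrow> nat \<Rightarrow> real" where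
  "aggZ k Y i j = (\<Sum>r<k. Y (r, i) (r, j))"

definition aggS :: "nat \<Rightarrow> (nat \<times> nat \<Rightarrow> nat \<times> nat \<Rightarrow> real) \<Rightarrow> nat \<Rightarrow> nat \<Rightarrow> real" where
  "aggS k Y i j = (\<Sum>r<k. \<Sum>l<k. Y (r, i) (l, j))"

text \<open>For \<open>k = 1\<close> the numerator vanishes, so the junk value \<open>x / 0 = 0\<close> does no harm.\<close>
definition aggX :: "nat \<Rightarrow> (nat \<times> nat \<Rightarrow> nat \<times> nat \<Rightarrow> real) \<Rightarrow> nat \<Rightarrow> nat \<Rightarrow> real" where
  "aggX k Y i j = (aggS k Y i j - aggZ k Y i j) / (real k - 1)"

lemma aggS_minus_aggZ:
  "aggS k Y i j - aggZ k Y i j = (\<Sum>r<k. \<Sum>l\<in>{..<k} - {r}. Y (r, i) (l, j))"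
  unfolding aggS_def aggZ_def sum_subtractf[symmetric]
  by (intro sum.cong refl) (simp add: sum.remove[of "{..<k}"])

lemma aggZ_plus_aggX: "1 \<le> k \<Longrightarrow> aggZ k Y i j + (real k - 1) * aggX k Y i j = aggS k Y i j"
  by (cases "k = 1") (simp_all add: aggX_def aggS_def aggZ_def)

lemma aggX_nonneg: "(\<And>r l. r < k \<Longrightarrow> l < k \<Longrightarrow> 0 \<le> Y (r, i) (l, j)) \<Longrightarrow> 0 \<le> aggX k Y i j"
  unfolding aggX_def aggS_minus_aggZ
  by (cases "k = 0") (auto intro!: divide_nonneg_nonneg sum_nonneg)

lemma aggX_diag: "(\<And>r l. r < k \<Longrightarrow> l < k \<Longrightarrow> r \<noteq> l \<Longrightarrow> Y (r, i) (l, i) = 0) \<Longrightarrow> aggX k Y i i = 0"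
  unfolding aggX_def aggS_minus_aggZ by simp

lemma objZ_aggZ: "objZ n (aggZ k Y) = objY n k Y"
  unfolding objZ_def objY_def aggZ_def by (rule sum.swap)

lemma sym_on_aggregates:
  assumes "sym_on (blk k n) Y"
  shows "sym_on {..<n} (aggZ k Y)" "sym_on {..<n} (aggS k Y)" "sym_on {..<n} (aggX k Y)"
proof -
  have Y: "Y (r, i) (l, j) = Y (l, j) (r, i)" if "r < k" "l < k" "i < n" "j < n" for r l i j
    using assms that unfolding sym_on_def by simp
  show Z: "sym_on {..<n} (aggZ k Y)"
    unfolding sym_on_def aggZ_def using Y by simp
  show S: "sym_on {..<n} (aggS k Y)"
    unfolding sym_on_def aggS_def using Y by (subst sum.swap) simp
  from Z S show "sym_on {..<n} (aggX k Y)"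
    unfolding sym_on_def aggX_def by simp
qed

lemma psd_on_aggZ_minus_aggX:
  assumes k: "1 \<le> k" and psd: "psd_on (blk k n) Y"
  shows "psd_on {..<n} (\<lambda>i j. aggZ k Y i j - aggX k Y i j)"
proof (cases "k = 1")
  case True
  show ?thesis
    by (rule psd_on_congruence[OF psd, where L = "\<lambda>i. indicator {(0, i)}"])
      (simp add: True aggZ_def aggX_def)
next
  case False
  with k have k2: "real k - 1 > 0" by simp
  \<comment> \<open>Summing the forms of \<open>e\<^sub>r\<^sub>i - e\<^sub>l\<^sub>i\<close> over all pairs of blocks gives \<open>2 k Z - 2 S = 2 (k - 1) (Z - X)\<close>.\<close>
  define L :: "nat \<times> nat \<Rightarrow> nat \<Rightarrow> nat \<times> nat \<Rightarrow> real"
    where "L \<rho> i = (\<lambda>x. indicator {(fst \<rho>, i)} x - indicator {(snd \<rho>, i)} x)" for \<rho> i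
  show ?thesis
  proof (rule psd_on_congruence_sum[OF psd, where R = "{..<k} \<times> {..<k}" and L = L
        and c = "\<lambda>_. 1 / (2 * (real k - 1))"])
    fix i j assume ij: "i \<in> {..<n}" "j \<in> {..<n}"
    have "(\<Sum>\<rho>\<in>{..<k} \<times> {..<k}. bform (blk k n) Y (L \<rho> i) (L \<rho> j))
      = (\<Sum>r<k. \<Sum>l<k. Y (r, i) (r, j) - Y (r, i) (l, j) - (Y (l, i) (r, j) - Y (l, i) (l, j)))"
      using ij by (auto simp: L_def sum.cartesian_product bform_linear intro!: sum.cong)
    also have "\<dots> = 2 * real k * aggZ k Y i j - 2 * aggS k Y i j"
    proof -
      have "(\<Sum>r<k. \<Sum>l<k. Y (r, i) (r, j)) = real k * aggZ k Y i j"
        "(\<Sum>r<k. \<Sum>l<k. Y (l, i) (l, j)) = real k * aggZ k Y i j"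
        unfolding aggZ_def by (simp_all add: sum_distrib_left)
      moreover have "(\<Sum>r<k. \<Sum>l<k. Y (l, i) (r, j)) = aggS k Y i j"
        unfolding aggS_def by (rule sum.swap)
      ultimately show ?thesis by (simp only: sum_subtractf aggS_def[symmetric])
    qed
    also have "\<dots> = 2 * (real k - 1) * (aggZ k Y i j - aggX k Y i j)"
      using aggZ_plus_aggX[OF k, of Y i j] by (simp add: algebra_simps)
    finally show "aggZ k Y i j - aggX k Y i j =
        (\<Sum>\<rho>\<in>{..<k} \<times> {..<k}. 1 / (2 * (real k - 1)) * bform (blk k n) Y (L \<rho> i) (L \<rho> j))"
      using k2 by (simp add: sum_divide_distrib[symmetric])
  qed (use k2 in simp)
qed

lemma psd_on_bordered_aggS:
  assumes psd: "psd_on (bidx (blk k n)) (bordered (\<lambda>a. Y a a) Y)"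
  shows "psd_on (bidx {..<n}) (bordered (\<lambda>i. aggZ k Y i i) (aggS k Y))"
proof -
  define L :: "nat option \<Rightarrow> (nat \<times> nat) option \<Rightarrow> real" where
    "L \<alpha> = (case \<alpha> of None \<Rightarrow> indicator {None} | Some i \<Rightarrow> (\<lambda>x. \<Sum>r<k. indicator {Some (r, i)} x))" for \<alpha>
  show ?thesis
  proof (rule psd_on_congruence[OF psd, where L = L])
    fix \<alpha> \<beta> assume "\<alpha> \<in> bidx {..<n}" "\<beta> \<in> bidx {..<n}"
    then show "bordered (\<lambda>i. aggZ k Y i i) (aggS k Y) \<alpha> \<beta>
        = bform (bidx (blk k n)) (bordered (\<lambda>a. Y a a) Y) (L \<alpha>) (L \<beta>)"
      by (cases \<alpha>; cases \<beta>) (auto simp: L_def bform_linear aggZ_def aggS_def)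
  qed
qed

lemma feasR1_aggregate:
  assumes k: "1 \<le> k" and sym: "sym_on (blk k n) Y"
    and edge: "\<forall>r<k. \<forall>i j. {i, j} \<in> E \<longrightarrow> Y (r, i) (r, j) = 0"
    and off: "\<forall>i<n. \<forall>r<k. \<forall>l<k. r \<noteq> l \<longrightarrow> Y (r, i) (l, i) = 0"
    and nonneg: "\<forall>a\<in>blk k n. \<forall>b\<in>blk k n. 0 \<le> Y a b"
    and psd: "psd_on (bidx (blk k n)) (bordered (\<lambda>a. Y a a) Y)"
    and pair: "\<forall>i<n. \<forall>j<n. j < i \<longrightarrow> 0 \<le> 1 - aggZ k Y i i - aggZ k Y j j + aggS k Y i j"
    and row: "\<forall>i<n. \<forall>j<n. i \<noteq> j \<longrightarrow> aggS k Y i j \<le> aggZ k Y i i"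
  shows "feasR1 n E k (aggZ k Y) (aggX k Y)"
  unfolding feasR1_def
proof (intro conjI)
  show "sym_on {..<n} (aggZ k Y)" "sym_on {..<n} (aggX k Y)"
    using sym_on_aggregates[OF sym] by simp_all
  show "\<forall>i j. {i, j} \<in> E \<longrightarrow> aggZ k Y i j = 0"
    using edge by (simp add: aggZ_def)
  show "\<forall>i<n. aggX k Y i i = 0"
    using off by (auto intro: aggX_diag)
  show "\<forall>i<n. \<forall>j<n. 0 \<le> aggZ k Y i j \<and> 0 \<le> aggX k Y i j"
    using nonneg by (auto simp: aggZ_def intro!: sum_nonneg aggX_nonneg)
  show "psd_on {..<n} (\<lambda>i j. aggZ k Y i j - aggX k Y i j)"
    using psd_on_aggZ_minus_aggX[OF k psd_on_bordered_imp_psd_on[OF psd]] by simp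
  show "psd_on (bidx {..<n})
      (bordered (\<lambda>i. aggZ k Y i i) (\<lambda>i j. aggZ k Y i j + (real k - 1) * aggX k Y i j))"
    using psd_on_bordered_aggS[OF psd] by (simp add: aggZ_plus_aggX[OF k])
  show "\<forall>i<n. \<forall>j<n. j < i \<longrightarrow> 0 \<le> 1 - aggZ k Y i i - aggZ k Y j j + aggZ k Y i j + (real k - 1) * aggX k Y i j"
    using pair by (simp add: add.assoc aggZ_plus_aggX[OF k])
  show "\<forall>i<n. \<forall>j<n. i \<noteq> j \<longrightarrow> 0 \<le> aggZ k Y i i - aggZ k Y i j - (real k - 1) * aggX k Y i j"
    using row by (simp add: diff_diff_eq aggZ_plus_aggX[OF k])
qed

lemma feasP2_imp_feasR1:
  assumes k: "1 \<le> k" and Y: "feasP2 n E k Y"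
  shows "feasR1 n E k (aggZ k Y) (aggX k Y)"
proof (rule feasR1_aggregate[OF k])
  show "\<forall>i<n. \<forall>j<n. i \<noteq> j \<longrightarrow> aggS k Y i j \<le> aggZ k Y i i"
  proof (intro allI impI)
    fix i j assume ij: "i < n" "j < n" "i \<noteq> j"
    have "aggS k Y i j = (\<Sum>l<k. \<Sum>r<k. Y (r, i) (l, j))"
      unfolding aggS_def by (rule sum.swap)
    also have "\<dots> \<le> (\<Sum>l<k. Y (l, i) (l, i))"
      using Y ij unfolding feasP2_def by (intro sum_mono) simp
    finally show "aggS k Y i j \<le> aggZ k Y i i" by (simp add: aggZ_def)
  qed
qed (use Y in \<open>simp_all add: feasP2_def aggZ_def aggS_def\<close>)

text \<open>The constraint \<open>\<Sum>\<^sub>r x\<^sub>r\<^sub>j = 1\<close> makes \<open>\<Sum>\<^sub>l e\<^sub>l\<^sub>j - e\<^sub>0\<close> a null vector of the bordered matrix.\<close>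
lemma feasP1_row_sum:
  assumes Y: "feasP1 n E k Y" and r: "r \<le> k" and ij: "i < n" "j < n"
  shows "(\<Sum>l<k+1. Y (r, i) (l, j)) = Y (r, i) (r, i)"
proof -
  let ?I = "bidx (blk (k+1) n)" and ?M = "bordered (\<lambda>a. Y a a) Y"
  have psd: "psd_on ?I ?M" and one: "(\<Sum>l<k+1. Y (l, j) (l, j)) = 1"
    and off: "\<And>l m. l < k+1 \<Longrightarrow> m < k+1 \<Longrightarrow> l \<noteq> m \<Longrightarrow> Y (l, j) (m, j) = 0"
    using Y ij unfolding feasP1_def by simp_all
  have diag: "(\<Sum>m<k+1. Y (l, j) (m, j)) = Y (l, j) (l, j)" if "l < k+1" for l
  proof -
    have "(\<Sum>m<k+1. Y (l, j) (m, j)) = (\<Sum>m<k+1. if m = l then Y (l, j) (l, j) else 0)"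
      using off that by (intro sum.cong) auto
    then show ?thesis using that by simp
  qed
  define w :: "(nat \<times> nat) option \<Rightarrow> real"
    where "w x = (\<Sum>l<k+1. indicator {Some (l, j)} x) - indicator {None} x" for x
  have "bform ?I ?M w w = (\<Sum>l<k+1. \<Sum>m<k+1. Y (l, j) (m, j)) - 2 * (\<Sum>l<k+1. Y (l, j) (l, j)) + 1"
    using ij unfolding w_def by (simp add: bform_linear sum.distrib)
  also have "\<dots> = 0"
    using diag one by simp
  finally have "bform ?I ?M (indicator {Some (r, i)}) w = 0"
    using psd_on_bform_null[OF psd] by blast
  then show ?thesis
    using r ij unfolding w_def by (simp add: bform_linear)
qed

lemma feasP1_imp_feasR1:
  assumes k: "1 \<le> k" and Y: "feasP1 n E k Y"
  shows "feasR1 n E k (aggZ k Y) (aggX k Y)"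
proof -
  have sym: "Y (r, i) (l, j) = Y (l, j) (r, i)" if "r \<le> k" "l \<le> k" "i < n" "j < n" for r l i j
    using Y that unfolding feasP1_def sym_on_def by simp
  have nonneg: "0 \<le> Y (r, i) (l, j)" if "r \<le> k" "l \<le> k" "i < n" "j < n" for r l i j
    using Y that unfolding feasP1_def by simp
  have sym_k: "sym_on (blk k n) Y"
    using sym unfolding sym_on_def blk_def by auto
  have last_col: "(\<Sum>r<k. Y (r, i) (k, j)) = aggZ k Y i i - aggS k Y i j" if "i < n" "j < n" for i j
    using feasP1_row_sum[OF Y _ that] unfolding aggZ_def aggS_def sum_subtractf[symmetric]
    by (intro sum.cong) (simp_all add: eq_diff_eq add.commute)
  show ?thesis
  proof (rule feasR1_aggregate[OF k sym_k])
    have "psd_on (bidx (blk (k+1) n)) (bordered (\<lambda>a. Y a a) Y)"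
      using Y unfolding feasP1_def by simp
    then show "psd_on (bidx (blk k n)) (bordered (\<lambda>a. Y a a) Y)"
      by (rule psd_on_subset) (simp_all add: bidx_mono blk_mono)
    show "\<forall>a\<in>blk k n. \<forall>b\<in>blk k n. 0 \<le> Y a b"
      using nonneg unfolding blk_def by auto
    show "\<forall>i<n. \<forall>j<n. i \<noteq> j \<longrightarrow> aggS k Y i j \<le> aggZ k Y i i"
    proof (intro allI impI)
      fix i j assume ij: "i < n" "j < n"
      have "0 \<le> (\<Sum>r<k. Y (r, i) (k, j))"
        using nonneg ij by (intro sum_nonneg) simp
      with last_col[OF ij] show "aggS k Y i j \<le> aggZ k Y i i" by simp
    qed
    show "\<forall>i<n. \<forall>j<n. j < i \<longrightarrow> 0 \<le> 1 - aggZ k Y i i - aggZ k Y j j + aggS k Y i j"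
    proof (intro allI impI)
      fix i j assume ij: "i < n" "j < n" "j < i"
      have "aggZ k Y i i + Y (k, i) (k, i) = 1"
        using Y ij unfolding feasP1_def aggZ_def by simp
      moreover have "(\<Sum>l<k. Y (k, i) (l, j)) + Y (k, i) (k, j) = Y (k, i) (k, i)"
        using feasP1_row_sum[OF Y _ ij(1,2), of k] by simp
      moreover have "(\<Sum>l<k. Y (k, i) (l, j)) = (\<Sum>l<k. Y (l, j) (k, i))"
        using ij by (intro sum.cong refl sym) auto
      moreover have "aggS k Y j i = aggS k Y i j"
        using sym_on_aggregates(2)[OF sym_k] ij unfolding sym_on_def by simp
      ultimately show "0 \<le> 1 - aggZ k Y i i - aggZ k Y j j + aggS k Y i j"
        using last_col[of j i] nonneg[of k k i j] ij by simp
    qed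
  qed (use Y in \<open>simp_all add: feasP1_def\<close>)
qed

section \<open>Spreading a pair \<open>(Z, X)\<close> over blocks\<close>

lemma sum_if_eq_const: "r < k \<Longrightarrow> (\<Sum>l<k. if l = r then a else b) = a + (real k - 1) * (b::real)"
  by (simp add: sum.remove[of _ r] of_nat_diff algebra_simps)

lemma sum_centered_delta:
  assumes "l < k" "m < k"
  shows "(\<Sum>r<k. (of_bool (r = l) - 1 / real k) * (of_bool (r = m) - 1 / real k))
    = of_bool (l = m) - 1 / real k"
proof -
  have "(\<Sum>r<k. (of_bool (r = l) - 1 / real k) * (of_bool (r = m) - 1 / real k))
      = of_bool (l = m) - 2 / real k + real k / (real k)\<^sup>2"
    using assms by (cases "l = m")
      (simp_all add: algebra_simps sum.distrib sum_subtractf power2_eq_square flip: sum_divide_distrib)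
  also have "\<dots> = of_bool (l = m) - 1 / real k"
    using assms by (simp add: power2_eq_square)
  finally show ?thesis .
qed

definition spread :: "nat \<Rightarrow> (nat \<Rightarrow> nat \<Rightarrow> real) \<Rightarrow> (nat \<Rightarrow> nat \<Rightarrow> real) \<Rightarrow> nat \<times> nat \<Rightarrow> nat \<times> nat \<Rightarrow> real" where
  "spread k Z X a b = (if fst a = fst b then Z (snd a) (snd b) else X (snd a) (snd b)) / real k"

lemma spread_apply: "spread k Z X (r, i) (l, j) = (if r = l then Z i j else X i j) / real k"
  by (simp add: spread_def)

lemma spread_same_block [simp]: "spread k Z X (r, i) (r, j) = Z i j / real k"
  by (simp add: spread_apply)

lemma sum_spread_diag [simp]: "1 \<le> k \<Longrightarrow> (\<Sum>r<k. spread k Z X (r, i) (r, j)) = Z i j"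
  by (simp add: spread_apply)

lemma sum_spread_row [simp]:
  "r < k \<Longrightarrow> (\<Sum>l<k. spread k Z X (r, i) (l, j)) = (Z i j + (real k - 1) * X i j) / real k"
  by (simp add: spread_apply sum_divide_distrib[symmetric] eq_commute[of r] sum_if_eq_const)

lemma sum_spread_col [simp]:
  "l < k \<Longrightarrow> (\<Sum>r<k. spread k Z X (r, i) (l, j)) = (Z i j + (real k - 1) * X i j) / real k"
  by (simp add: spread_apply sum_divide_distrib[symmetric] sum_if_eq_const)

lemma sum_spread_all [simp]:
  "1 \<le> k \<Longrightarrow> (\<Sum>r<k. \<Sum>l<k. spread k Z X (r, i) (l, j)) = Z i j + (real k - 1) * X i j"
  by simp

lemma objY_spread: "1 \<le> k \<Longrightarrow> objY n k (spread k Z X) = objZ n Z"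
  unfolding objZ_aggZ[symmetric] objZ_def aggZ_def by simp

text \<open>With \<open>S = Z + (k - 1) X\<close> and \<open>J\<close> the all-ones \<open>k \<times> k\<close> matrix, the spread matrix is
  \<open>J \<otimes> S / k\<^sup>2 + (I - J / k) \<otimes> (Z - X) / k\<close>.\<close>
lemma psd_on_bordered_spread:
  assumes k: "1 \<le> k" and W: "psd_on {..<n} (\<lambda>i j. Z i j - X i j)"
    and B: "psd_on (bidx {..<n}) (bordered (\<lambda>i. Z i i) (\<lambda>i j. Z i j + (real k - 1) * X i j))"
  shows "psd_on (bidx (blk k n)) (bordered (\<lambda>a. spread k Z X a a) (spread k Z X))"
proof -
  let ?I = "bidx (blk k n)" and ?W = "\<lambda>i j. Z i j - X i j"
    and ?B = "bordered (\<lambda>i. Z i i) (\<lambda>i j. Z i j + (real k - 1) * X i j)"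
  define L1 :: "(nat \<times> nat) option \<Rightarrow> nat option \<Rightarrow> real" where
    "L1 \<alpha> = (case \<alpha> of None \<Rightarrow> indicator {None} | Some (l, i) \<Rightarrow> (\<lambda>x. indicator {Some i} x / real k))" for \<alpha>
  define L2 :: "nat \<Rightarrow> (nat \<times> nat) option \<Rightarrow> nat \<Rightarrow> real" where
    "L2 r \<alpha> = (case \<alpha> of None \<Rightarrow> (\<lambda>_. 0)
      | Some (l, i) \<Rightarrow> (\<lambda>x. (of_bool (r = l) - 1 / real k) * indicator {i} x))" for r \<alpha>
  have P1: "psd_on ?I (\<lambda>\<alpha> \<beta>. bform (bidx {..<n}) ?B (L1 \<alpha>) (L1 \<beta>))"
    by (rule psd_on_congruence[OF B]) simp
  have P2: "psd_on ?I (\<lambda>\<alpha> \<beta>. \<Sum>r<k. 1 / real k * bform {..<n} ?W (L2 r \<alpha>) (L2 r \<beta>))"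
    by (rule psd_on_congruence_sum[OF W, where R = "{..<k}" and c = "\<lambda>_. 1 / real k" and L = L2]) simp_all
  have k0: "real k \<noteq> 0" using k by simp
  have L2_None: "L2 r None = (\<lambda>_. 0)" for r
    by (simp add: L2_def)
  have L2_some: "(\<Sum>r<k. bform {..<n} ?W (L2 r (Some (l, i))) (L2 r (Some (m, j))) / real k)
      = (of_bool (l = m) - 1 / real k) * (Z i j - X i j) / real k"
    if "l < k" "m < k" "i < n" "j < n" for l m i j
  proof -
    have "(\<Sum>r<k. bform {..<n} ?W (L2 r (Some (l, i))) (L2 r (Some (m, j))) / real k)
        = (\<Sum>r<k. (of_bool (r = l) - 1 / real k) * (of_bool (r = m) - 1 / real k)) * (Z i j - X i j) / real k"
      using that by (simp add: L2_def bform_linear)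
        (simp add: mult_ac flip: sum_divide_distrib sum_distrib_left)
    then show ?thesis
      using that by (simp add: sum_centered_delta)
  qed
  show ?thesis
  proof (rule psd_on_cong[OF psd_on_add[OF P1 P2]])
    fix \<alpha> \<beta> assume "\<alpha> \<in> ?I" "\<beta> \<in> ?I"
    then show "bform (bidx {..<n}) ?B (L1 \<alpha>) (L1 \<beta>)
        + (\<Sum>r<k. 1 / real k * bform {..<n} ?W (L2 r \<alpha>) (L2 r \<beta>))
      = bordered (\<lambda>a. spread k Z X a a) (spread k Z X) \<alpha> \<beta>"
      using k0 by (cases \<alpha>; cases \<beta>) (auto simp: L1_def L2_None L2_some bform_linear spread_apply field_simps)
  qed
qed

lemma feasP2_spread:
  assumes k: "1 \<le> k" and R: "feasR1 n E k Z X"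
  shows "feasP2 n E k (spread k Z X)"
  unfolding feasP2_def
proof (intro conjI)
  have k0: "0 < real k" using k by simp
  have symZ: "sym_on {..<n} Z" and symX: "sym_on {..<n} X" and Xd: "\<forall>i<n. X i i = 0"
    and nonneg: "\<forall>i<n. \<forall>j<n. 0 \<le> Z i j \<and> 0 \<le> X i j"
    and row: "\<forall>i<n. \<forall>j<n. i \<noteq> j \<longrightarrow> 0 \<le> Z i i - Z i j - (real k - 1) * X i j"
    using R unfolding feasR1_def by simp_all
  show "sym_on (blk k n) (spread k Z X)"
    using symZ symX unfolding sym_on_def blk_def by (auto simp: spread_apply)
  show "\<forall>r<k. \<forall>i j. {i, j} \<in> E \<longrightarrow> spread k Z X (r, i) (r, j) = 0"
    using R unfolding feasR1_def by (simp add: spread_apply)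
  show "\<forall>i<n. \<forall>r<k. \<forall>l<k. r \<noteq> l \<longrightarrow> spread k Z X (r, i) (l, i) = 0"
    using Xd by (simp add: spread_apply)
  show "\<forall>a\<in>blk k n. \<forall>b\<in>blk k n. 0 \<le> spread k Z X a b"
    using nonneg unfolding blk_def by (auto simp: spread_def)
  show "psd_on (bidx (blk k n)) (bordered (\<lambda>a. spread k Z X a a) (spread k Z X))"
    using psd_on_bordered_spread[OF k] R unfolding feasR1_def by simp
  show "\<forall>i<n. \<forall>j<n. j < i \<longrightarrow> 0 \<le> 1 - (\<Sum>r<k. spread k Z X (r, i) (r, i))
      - (\<Sum>r<k. spread k Z X (r, j) (r, j)) + (\<Sum>r<k. \<Sum>l<k. spread k Z X (r, i) (l, j))"
    using R k unfolding feasR1_def by (simp add: add.assoc)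
  show "\<forall>i<n. \<forall>j<n. i \<noteq> j \<longrightarrow> (\<forall>l<k. 0 \<le> spread k Z X (l, i) (l, i) - (\<Sum>r<k. spread k Z X (r, i) (l, j)))"
  proof (intro allI impI)
    fix i j l assume "i < n" "j < n" "i \<noteq> j" "l < k"
    with row k0 have "0 \<le> (Z i i - Z i j - (real k - 1) * X i j) / real k" by simp
    with \<open>l < k\<close> show "0 \<le> spread k Z X (l, i) (l, i) - (\<Sum>r<k. spread k Z X (r, i) (l, j))"
      by (simp add: diff_divide_distrib add_divide_distrib)
  qed
qed

text \<open>Block \<open>k\<close> carries the complementary indicator \<open>1 - \<Sum>\<^sub>r x\<^sub>r\<close>.\<close>
definition spread_ext :: "nat \<Rightarrow> (nat \<Rightarrow> nat \<Rightarrow> real) \<Rightarrow> (nat \<Rightarrow> nat \<Rightarrow> real) \<Rightarrow> nat \<times> nat \<Rightarrow> nat \<times> nat \<Rightarrow> real" where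
  "spread_ext k Z X a b = (let i = snd a; j = snd b in
     if fst a < k \<and> fst b < k then spread k Z X a b
     else if fst a < k then (Z i i - Z i j - (real k - 1) * X i j) / real k
     else if fst b < k then (Z j j - Z i j - (real k - 1) * X i j) / real k
     else 1 - Z i i - Z j j + Z i j + (real k - 1) * X i j)"

lemma spread_ext_simps [simp]:
  "r < k \<Longrightarrow> l < k \<Longrightarrow> spread_ext k Z X (r, i) (l, j) = spread k Z X (r, i) (l, j)"
  "r < k \<Longrightarrow> k \<le> l \<Longrightarrow> spread_ext k Z X (r, i) (l, j) = (Z i i - Z i j - (real k - 1) * X i j) / real k"
  "k \<le> r \<Longrightarrow> l < k \<Longrightarrow> spread_ext k Z X (r, i) (l, j) = (Z j j - Z i j - (real k - 1) * X i j) / real k"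
  "k \<le> r \<Longrightarrow> k \<le> l \<Longrightarrow> spread_ext k Z X (r, i) (l, j) = 1 - Z i i - Z j j + Z i j + (real k - 1) * X i j"
  by (simp_all add: spread_ext_def)

lemma psd_on_bordered_spread_ext:
  assumes k: "1 \<le> k" and Xd: "\<forall>i<n. X i i = 0"
    and psd: "psd_on (bidx (blk k n)) (bordered (\<lambda>a. spread k Z X a a) (spread k Z X))"
  shows "psd_on (bidx (blk (k+1) n)) (bordered (\<lambda>a. spread_ext k Z X a a) (spread_ext k Z X))"
proof -
  let ?I = "bidx (blk k n)" and ?M = "bordered (\<lambda>a. spread k Z X a a) (spread k Z X)"
  define u :: "nat \<Rightarrow> (nat \<times> nat) option \<Rightarrow> real" where
    "u i = (\<lambda>x. \<Sum>l<k. indicator {Some (l, i)} x)" for i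
  define L :: "(nat \<times> nat) option \<Rightarrow> (nat \<times> nat) option \<Rightarrow> real" where
    "L \<alpha> = (case \<alpha> of None \<Rightarrow> indicator {None} | Some (r, i) \<Rightarrow>
       if r < k then indicator {Some (r, i)} else (\<lambda>x. indicator {None} x - u i x))" for \<alpha>
  have k0: "real k \<noteq> 0" using k by simp
  have u: "bform ?I ?M (indicator {None}) (u j) = Z j j"
    "bform ?I ?M (u i) (indicator {None}) = Z i i"
    "r < k \<Longrightarrow> bform ?I ?M (indicator {Some (r, i)}) (u j) = (Z i j + (real k - 1) * X i j) / real k"
    "l < k \<Longrightarrow> bform ?I ?M (u i) (indicator {Some (l, j)}) = (Z i j + (real k - 1) * X i j) / real k"
    "bform ?I ?M (u i) (u j) = Z i j + (real k - 1) * X i j"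
    if "i < n" "j < n" for i j r l
    using that k by (simp_all add: u_def bform_linear)
  show ?thesis
  proof (rule psd_on_congruence[OF psd, where L = L])
    fix \<alpha> \<beta> assume "\<alpha> \<in> bidx (blk (k+1) n)" "\<beta> \<in> bidx (blk (k+1) n)"
    then show "bordered (\<lambda>a. spread_ext k Z X a a) (spread_ext k Z X) \<alpha> \<beta> = bform ?I ?M (L \<alpha>) (L \<beta>)"
      using Xd k0 by (cases \<alpha>; cases \<beta>)
        (auto simp: L_def bform_linear u diff_divide_distrib add_divide_distrib)
  qed
qed

lemma objY_spread_ext: "1 \<le> k \<Longrightarrow> objY n k (spread_ext k Z X) = objZ n Z"
  using objY_spread[of k n Z X] unfolding objY_def by simp

lemma feasP1_spread_ext:
  assumes k: "1 \<le> k" and R: "feasR1 n E k Z X"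
  shows "feasP1 n E k (spread_ext k Z X)"
  unfolding feasP1_def
proof (intro conjI)
  have k0: "0 < real k" using k by simp
  have symZ: "Z i j = Z j i" and symX: "X i j = X j i" if "i < n" "j < n" for i j
    using R that unfolding feasR1_def sym_on_def by simp_all
  have Xd: "\<forall>i<n. X i i = 0"
    and nonneg: "\<forall>i<n. \<forall>j<n. 0 \<le> Z i j \<and> 0 \<le> X i j"
    and W: "psd_on {..<n} (\<lambda>i j. Z i j - X i j)"
    and B: "psd_on (bidx {..<n}) (bordered (\<lambda>i. Z i i) (\<lambda>i j. Z i j + (real k - 1) * X i j))"
    and pair: "\<forall>i<n. \<forall>j<n. j < i \<longrightarrow> 0 \<le> 1 - Z i i - Z j j + Z i j + (real k - 1) * X i j"
    and row: "\<forall>i<n. \<forall>j<n. i \<noteq> j \<longrightarrow> 0 \<le> Z i i - Z i j - (real k - 1) * X i j"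
    using R unfolding feasR1_def by simp_all
  have pair_all: "0 \<le> 1 - Z i i - Z j j + Z i j + (real k - 1) * X i j" if "i < n" "j < n" for i j
  proof (cases i j rule: linorder_cases)
    case less
    then have "0 \<le> 1 - Z j j - Z i i + Z j i + (real k - 1) * X j i"
      using pair that by simp
    then show ?thesis
      using symZ[of j i] symX[of j i] that by simp
  next
    case equal
    then show ?thesis
      using psd_on_bordered_diag[OF B, of i] Xd that by simp
  qed (use pair that in simp)
  have row_all: "0 \<le> Z i i - Z i j - (real k - 1) * X i j" if "i < n" "j < n" for i j
    using row Xd that by (cases "i = j") simp_all
  have row_all': "0 \<le> Z j j - Z i j - (real k - 1) * X i j" if "i < n" "j < n" for i j
    using row_all[OF that(2,1)] symZ[OF that] symX[OF that] by simp
  show "sym_on (blk (k+1) n) (spread_ext k Z X)"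
    unfolding sym_on_def
  proof (intro ballI)
    fix a b assume "a \<in> blk (k+1) n" "b \<in> blk (k+1) n"
    then obtain r i l j where ab: "a = (r, i)" "b = (l, j)" "i < n" "j < n"
      by (cases a, cases b) auto
    then show "spread_ext k Z X a b = spread_ext k Z X b a"
      using symZ[of j i] symX[of j i] by (auto simp: spread_ext_def spread_def Let_def)
  qed
  show "\<forall>r<k. \<forall>i j. {i, j} \<in> E \<longrightarrow> spread_ext k Z X (r, i) (r, j) = 0"
    using R unfolding feasR1_def by simp
  show "\<forall>i<n. (\<Sum>r<k+1. spread_ext k Z X (r, i) (r, i)) = 1"
    using Xd k by simp
  show "\<forall>i<n. \<forall>r<k+1. \<forall>l<k+1. r \<noteq> l \<longrightarrow> spread_ext k Z X (r, i) (l, i) = 0"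
    using Xd by (auto simp: spread_ext_def spread_def Let_def)
  show "\<forall>a\<in>blk (k+1) n. \<forall>b\<in>blk (k+1) n. 0 \<le> spread_ext k Z X a b"
    using nonneg pair_all row_all row_all' k0 unfolding blk_def by (auto simp: spread_ext_def spread_def Let_def)
  show "psd_on (bidx (blk (k+1) n)) (bordered (\<lambda>a. spread_ext k Z X a a) (spread_ext k Z X))"
    using psd_on_bordered_spread_ext[OF k Xd psd_on_bordered_spread[OF k W B]] .
qed

section \<open>Strict feasibility\<close>

lemma pd_on_iff_bform: "pd_on I M \<longleftrightarrow> sym_on I M \<and> (\<forall>x. (\<exists>i\<in>I. x i \<noteq> 0) \<longrightarrow> 0 < bform I M x x)"
  unfolding pd_on_def bform_def by simp

lemma bform_scaled_identity:
  assumes "finite I"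
  shows "bform I (\<lambda>i j. if i = j then e else 0) u u = e * (\<Sum>i\<in>I. (u i)\<^sup>2)"
proof -
  have "u a * (if a = b then e else 0) * u b = (if b = a then e * (u a)\<^sup>2 else 0)" for a b
    by (simp add: power2_eq_square)
  then show ?thesis
    using assms by (simp add: bform_def sum_distrib_left)
qed

lemma sum_squares_pos: "finite I \<Longrightarrow> i \<in> I \<Longrightarrow> x i \<noteq> 0 \<Longrightarrow> 0 < (\<Sum>i\<in>I. (x i :: real)\<^sup>2)"
  by (rule sum_pos2[of I i]) auto

lemma pd_on_scaled_identity: "finite I \<Longrightarrow> 0 < e \<Longrightarrow> pd_on I (\<lambda>i j. if i = j then e else 0)"
  unfolding pd_on_iff_bform sym_on_def
  by (auto simp: bform_scaled_identity intro!: mult_pos_pos sum_squares_pos)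

text \<open>The form is \<open>e \<Sum>\<^sub>i (x\<^sub>i + t)\<^sup>2 + (1 - e |I|) t\<^sup>2\<close>, where \<open>t\<close> is the border coordinate.\<close>
lemma pd_on_bordered_scaled_identity:
  assumes I: "finite I" and e: "0 < e" "e * real (card I) < 1"
  shows "pd_on (bidx I) (bordered (\<lambda>_. e) (\<lambda>i j. if i = j then e else 0))"
  unfolding pd_on_iff_bform
proof (intro conjI allI impI)
  show "sym_on (bidx I) (bordered (\<lambda>_. e) (\<lambda>i j. if i = j then e else 0))"
    by (rule sym_on_bordered) (simp add: sym_on_def)
  fix x :: "'a option \<Rightarrow> real" assume nz: "\<exists>a\<in>bidx I. x a \<noteq> 0"
  let ?t = "x None"
  have "bform (bidx I) (bordered (\<lambda>_. e) (\<lambda>i j. if i = j then e else 0)) x x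
      = e * (\<Sum>i\<in>I. (x (Some i) + ?t)\<^sup>2) + (1 - e * real (card I)) * ?t\<^sup>2"
    using I by (simp add: bform_bordered bform_scaled_identity power2_sum sum.distrib
        sum_distrib_left algebra_simps)
  moreover have "0 < e * (\<Sum>i\<in>I. (x (Some i) + ?t)\<^sup>2) + (1 - e * real (card I)) * ?t\<^sup>2"
  proof (cases "?t = 0")
    case True
    with nz obtain i where "i \<in> I" "x (Some i) \<noteq> 0" by (auto simp: bidx_def)
    with True I e show ?thesis by (simp add: sum_squares_pos)
  next
    case False
    with e show ?thesis
      by (intro add_nonneg_pos mult_nonneg_nonneg mult_pos_pos) (simp_all add: sum_nonneg)
  qed
  ultimately show "0 < bform (bidx I) (bordered (\<lambda>_. e) (\<lambda>i j. if i = j then e else 0)) x x"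
    by simp
qed

lemma feasR1_strictly_feasible:
  assumes G: "simple_graph n E"
  shows "\<exists>Z X. feasR1 n E k Z X \<and> pd_on {..<n} (\<lambda>i j. Z i j - X i j) \<and>
    pd_on (bidx {..<n}) (bordered (\<lambda>i. Z i i) (\<lambda>i j. Z i j + (real k - 1) * X i j))"
proof (intro exI conjI)
  define e :: real where "e = 1 / (real n + 2)"
  have e: "0 < e" "e * real n < 1" "e \<le> 1 / 2"
    unfolding e_def by (simp_all add: field_simps)
  let ?Z = "\<lambda>i j :: nat. if i = j then e else 0" and ?X = "\<lambda>i j :: nat. 0 :: real"
  have pd: "pd_on {..<n} ?Z" "pd_on (bidx {..<n}) (bordered (\<lambda>_. e) ?Z)"
    using e by (simp_all add: pd_on_scaled_identity pd_on_bordered_scaled_identity)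
  then show "pd_on {..<n} (\<lambda>i j. ?Z i j - ?X i j)"
    "pd_on (bidx {..<n}) (bordered (\<lambda>i. ?Z i i) (\<lambda>i j. ?Z i j + (real k - 1) * ?X i j))"
    by simp_all
  have "i \<noteq> j" if "{i, j} \<in> E" for i j
    using G that unfolding simple_graph_def by (metis doubleton_eq_iff)
  with pd e show "feasR1 n E k ?Z ?X"
    unfolding feasR1_def by (auto simp: pd_on_imp_psd_on sym_on_def)
qed

theorem theorem3:
  fixes n k :: nat and E :: "nat set set"
  assumes "simple_graph n E" and "k \<ge> 1"
  shows
    "(\<forall>Y. feasP1 n E k Y \<longrightarrow> (\<exists>Y'. feasP2 n E k Y' \<and> objY n k Y' = objY n k Y)) \<and>
     (\<forall>Y. feasP1 n E k Y \<longrightarrow> (\<exists>Z X. feasR1 n E k Z X \<and> objZ n Z = objY n k Y)) \<and>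
     (\<forall>Y. feasP2 n E k Y \<longrightarrow> (\<exists>Y'. feasP1 n E k Y' \<and> objY n k Y' = objY n k Y)) \<and>
     (\<forall>Y. feasP2 n E k Y \<longrightarrow> (\<exists>Z X. feasR1 n E k Z X \<and> objZ n Z = objY n k Y)) \<and>
     (\<forall>Z X. feasR1 n E k Z X \<longrightarrow> (\<exists>Y. feasP1 n E k Y \<and> objY n k Y = objZ n Z)) \<and>
     (\<forall>Z X. feasR1 n E k Z X \<longrightarrow> (\<exists>Y. feasP2 n E k Y \<and> objY n k Y = objZ n Z)) \<and>
     (\<exists>Z X. feasR1 n E k Z X \<and> pd_on {..<n} (\<lambda>i j. Z i j - X i j) \<and>
        pd_on (bidx {..<n}) (bordered (\<lambda>i. Z i i) (\<lambda>i j. Z i j + (real k - 1) * X i j)))"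
proof -
  note k = assms(2)
  show ?thesis
  proof (intro conjI allI impI)
    fix Y assume Y: "feasP1 n E k Y"
    then show "\<exists>Z X. feasR1 n E k Z X \<and> objZ n Z = objY n k Y"
      using feasP1_imp_feasR1[OF k] objZ_aggZ by blast
    show "\<exists>Y'. feasP2 n E k Y' \<and> objY n k Y' = objY n k Y"
      using feasP2_spread[OF k feasP1_imp_feasR1[OF k Y]] objY_spread[OF k] objZ_aggZ by metis
  next
    fix Y assume Y: "feasP2 n E k Y"
    then show "\<exists>Z X. feasR1 n E k Z X \<and> objZ n Z = objY n k Y"
      using feasP2_imp_feasR1[OF k] objZ_aggZ by blast
    show "\<exists>Y'. feasP1 n E k Y' \<and> objY n k Y' = objY n k Y"
      using feasP1_spread_ext[OF k feasP2_imp_feasR1[OF k Y]] objY_spread_ext[OF k] objZ_aggZ by metis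
  next
    fix Z X assume "feasR1 n E k Z X"
    then show "\<exists>Y. feasP1 n E k Y \<and> objY n k Y = objZ n Z"
      and "\<exists>Y. feasP2 n E k Y \<and> objY n k Y = objZ n Z"
      using feasP1_spread_ext[OF k] feasP2_spread[OF k] objY_spread_ext[OF k] objY_spread[OF k] by blast+
  qed (rule feasR1_strictly_feasible[OF assms(1)])
qed

end
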